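(* Let $G$ be a connected balanced weighted graph on the vertex set $V=\{1,\dots,n\}$ with symmetric real edge weights $\gamma_{ij}=\gamma_{ji}$, and let $V=V_1\cup V_2$ be a decomposition into two disjoint subsets such that $\gamma_{ij}\ge 0$ whenever $i,j$ lie in the same subset and $\gamma_{ij}\le 0$ whenever $i,j$ lie in different subsets. Let $W\in\mathcal{W}$, let $\kappa>0$, and let $x\in\mathbb{R}^n$ be a global minimizer of $$E_{W,G,\kappa}(x)=\sum_{i=1}^n W(x_i)+\frac{\kappa}{2}\sum_{i,j=1}^n\gamma_{ij}(x_i-x_j)^2 .$$ Then $x_i\neq 0$ for all $i$, and for all $i,j$, $x_i$ and $x_j$ have the same sign if and only if $i$ and $j$ belong to the same subset ($V_1$ or $V_2$).
   Context: A weighted graph $G=(V,E,\Gamma)$ has vertices $V=\{1,\dots,n\}$ and symmetric real weights $\gamma_{ij}=\gamma_{ji}$ (possibly negative) on its edges; $\gamma_{ij}=0$ if $i,j$ are not joined by an edge. $G$ is connected if the graph whose edges are the pairs $\{i,j\}$ with $\gamma_{ij}\neq0$ is connected. $G$ is balanced if every cycle contains an even number of edges with negative weight; for balanced graphs a decomposition $V=V_1\cup V_2$ as in the claim exists (Cartwright–Harary). $\mathcal{W}$ is the set of even functions $W\in C^2(\mathbb{R})$ for which there is some $m>0$ with $W'(\pm m)=0$, $W'(x)>0$ for $x\in(-m,0)\cup(m,\infty)$, $W'(x)<0$ for $x\in(-\infty,-m)\cup(0,m)$, and $\lim_{x\to\pm\infty}W(x)/x^2=\infty$. *)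

theory Defs
  imports "HOL-Analysis.Analysis"
begin

text \<open>Vertices are 1..n; weights gamma :: nat => nat => real; points of R^n are
  functions nat => real, only the values on {1..n} matter.\<close>

definition C2_real :: "(real \<Rightarrow> real) \<Rightarrow> bool" where
  "C2_real W \<longleftrightarrow> (\<forall>x. W differentiable at x) \<and> (\<forall>x. deriv W differentiable at x)
     \<and> continuous_on UNIV (deriv (deriv W))"

definition W_class :: "(real \<Rightarrow> real) set" where
  "W_class = {W. (\<forall>x. W (-x) = W x) \<and> C2_real W \<and>
     (\<exists>m>0. deriv W m = 0 \<and> deriv W (-m) = 0 \<and>
        (\<forall>x. (-m < x \<and> x < 0) \<or> m < x \<longrightarrow> deriv W x > 0) \<and>
        (\<forall>x. x < -m \<or> (0 < x \<and> x < m) \<longrightarrow> deriv W x < 0)) \<and>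
     filterlim (\<lambda>x. W x / x\<^sup>2) at_top at_top \<and>
     filterlim (\<lambda>x. W x / x\<^sup>2) at_top at_bot}"

definition energy :: "(real \<Rightarrow> real) \<Rightarrow> nat \<Rightarrow> (nat \<Rightarrow> nat \<Rightarrow> real) \<Rightarrow> real \<Rightarrow> (nat \<Rightarrow> real) \<Rightarrow> real" where
  "energy W n \<gamma> \<kappa> x = (\<Sum>i=1..n. W (x i)) +
     \<kappa> / 2 * (\<Sum>i=1..n. \<Sum>j=1..n. \<gamma> i j * (x i - x j)\<^sup>2)"

definition graph_connected :: "nat \<Rightarrow> (nat \<Rightarrow> nat \<Rightarrow> real) \<Rightarrow> bool" where
  "graph_connected n \<gamma> \<longleftrightarrow> (\<forall>i\<in>{1..n}. \<forall>j\<in>{1..n}.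
     (i, j) \<in> ({(a, b). a \<in> {1..n} \<and> b \<in> {1..n} \<and> \<gamma> a b \<noteq> 0})\<^sup>*)"

definition is_cycle :: "nat \<Rightarrow> (nat \<Rightarrow> nat \<Rightarrow> real) \<Rightarrow> nat list \<Rightarrow> bool" where
  "is_cycle n \<gamma> cs \<longleftrightarrow> length cs \<ge> 3 \<and> distinct cs \<and> set cs \<subseteq> {1..n} \<and>
     (\<forall>k < length cs. \<gamma> (cs ! k) (cs ! ((k + 1) mod length cs)) \<noteq> 0)"

definition balanced :: "nat \<Rightarrow> (nat \<Rightarrow> nat \<Rightarrow> real) \<Rightarrow> bool" where
  "balanced n \<gamma> \<longleftrightarrow> (\<forall>cs. is_cycle n \<gamma> cs \<longrightarrow>
     even (card {k. k < length cs \<and> \<gamma> (cs ! k) (cs ! ((k + 1) mod length cs)) < 0}))"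

end

theory Submission
  imports Defs
begin

text \<open>Flip each coordinate to the sign prescribed by the partition and raise its absolute
  value to at least the well \<open>m > 0\<close> of \<open>W\<close>. Since \<open>W\<close> is even and strictly decreasing on
  \<open>[0, m]\<close>, no potential term grows; since the flip makes every weight nonnegative, no
  interaction term grows either. At a minimizer every term must therefore stay the same:
  this forces \<open>|x i| \<ge> m\<close>, and along each edge it forces the relative sign of \<open>x\<close> prescribed
  by the partition, which connectivity propagates to all pairs of vertices.\<close>

lemma W_class_even:
  assumes "W \<in> W_class"
  shows "W (- t) = W t"
  using assms unfolding W_class_def by blast

lemma W_class_strictly_decreasing:
  assumes "W \<in> W_class"
  obtains m where "m > 0" "\<And>a b. 0 \<le> a \<Longrightarrow> a < b \<Longrightarrow> b \<le> m \<Longrightarrow> W b < W a"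
proof -
  from assms obtain m where "m > 0" and neg: "\<forall>t. 0 < t \<and> t < m \<longrightarrow> deriv W t < 0"
    and "C2_real W"
    unfolding W_class_def by auto
  then have der: "DERIV W t :> deriv W t" for t
    unfolding C2_real_def by (simp add: DERIV_deriv_iff_real_differentiable)
  have "W b < W a" if "0 \<le> a" "a < b" "b \<le> m" for a b
  proof (rule DERIV_neg_imp_decreasing_open[OF \<open>a < b\<close>])
    fix t assume "a < t" "t < b"
    with that neg der show "\<exists>d. DERIV W t :> d \<and> d < 0"
      by (meson le_less_trans less_le_trans)
  next
    show "continuous_on {a..b} W"
      using der by (meson DERIV_isCont continuous_at_imp_continuous_on)
  qed
  with \<open>m > 0\<close> show thesis by (rule that)
qed

lemma even_decreasing_lift:
  fixes W :: "real \<Rightarrow> real"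
  assumes even: "\<And>t. W (- t) = W t"
    and decr: "\<And>a b. 0 \<le> a \<Longrightarrow> a < b \<Longrightarrow> b \<le> m \<Longrightarrow> W b < W a"
    and "s \<in> {-1, 1}"
  shows "W (s * max m \<bar>a\<bar>) \<le> W a"
    and "W (s * max m \<bar>a\<bar>) = W a \<Longrightarrow> m \<le> \<bar>a\<bar>"
proof -
  have lift: "W (s * max m \<bar>a\<bar>) = W (max m \<bar>a\<bar>)" and abs: "W a = W \<bar>a\<bar>"
    using \<open>s \<in> {-1, 1}\<close> even by (auto simp: abs_if)
  show "W (s * max m \<bar>a\<bar>) \<le> W a"
    using decr[of "\<bar>a\<bar>" m] unfolding lift abs by (cases "\<bar>a\<bar> < m") auto
  show "m \<le> \<bar>a\<bar>" if "W (s * max m \<bar>a\<bar>) = W a"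
    using that decr[of "\<bar>a\<bar>" m] unfolding lift abs by force
qed

lemma abs_diff_le_max_abs_add:
  fixes a b c :: real
  assumes "0 \<le> c"
  shows "\<bar>a - b\<bar> \<le> (max c \<bar>a\<bar>) + (max c \<bar>b\<bar>)"
  using assms by linarith

lemma abs_max_abs_diff_le:
  fixes a b c :: real
  shows "\<bar>(max c \<bar>a\<bar>) - (max c \<bar>b\<bar>)\<bar> \<le> \<bar>a - b\<bar>"
  by linarith

lemma interaction_le_aligned_lift:
  fixes g a b c si sj :: real
  assumes "si \<in> {-1, 1}" "sj \<in> {-1, 1}" "0 \<le> si * sj * g" "0 \<le> c"
  shows "g * (si * (max c \<bar>a\<bar>) - sj * (max c \<bar>b\<bar>))\<^sup>2 \<le> g * (a - b)\<^sup>2"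
proof (cases "si = sj")
  case True
  then have "0 \<le> g" "(si * (max c \<bar>a\<bar>) - sj * (max c \<bar>b\<bar>))\<^sup>2 = ((max c \<bar>a\<bar>) - (max c \<bar>b\<bar>))\<^sup>2"
    using assms by (auto simp: power2_eq_square algebra_simps)
  moreover have "((max c \<bar>a\<bar>) - (max c \<bar>b\<bar>))\<^sup>2 \<le> (a - b)\<^sup>2"
    using abs_max_abs_diff_le by (simp add: abs_le_square_iff)
  ultimately show ?thesis by (simp add: mult_left_mono)
next
  case False
  then have "g \<le> 0" "(si * (max c \<bar>a\<bar>) - sj * (max c \<bar>b\<bar>))\<^sup>2 = ((max c \<bar>a\<bar>) + (max c \<bar>b\<bar>))\<^sup>2"
    using assms by (auto simp: power2_eq_square algebra_simps)
  moreover have "(a - b)\<^sup>2 \<le> ((max c \<bar>a\<bar>) + (max c \<bar>b\<bar>))\<^sup>2"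
    using power_mono[OF abs_diff_le_max_abs_add[OF \<open>0 \<le> c\<close>, of a b] abs_ge_zero, of 2]
    by simp
  ultimately show ?thesis by (simp add: mult_left_mono_neg)
qed

lemma sgn_eq_of_aligned_interaction_eq:
  fixes g a b si sj :: real
  assumes "si \<in> {-1, 1}" "sj \<in> {-1, 1}" "g \<noteq> 0" "a \<noteq> 0" "b \<noteq> 0"
    and "g * (si * \<bar>a\<bar> - sj * \<bar>b\<bar>)\<^sup>2 = g * (a - b)\<^sup>2"
  shows "si * sgn a = sj * sgn b"
proof -
  have "(si * \<bar>a\<bar> - sj * \<bar>b\<bar>)\<^sup>2 = (a - b)\<^sup>2"
    using assms(3,6) by simp
  then have "si * sj * (\<bar>a\<bar> * \<bar>b\<bar>) = a * b"
    using assms(1,2) by (auto simp: power2_eq_square algebra_simps)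
  then show ?thesis
    using assms(1,2,4,5) by (auto simp: sgn_if abs_if split: if_splits)
qed

lemma energy_termwise_le_imp_eq:
  fixes x y :: "nat \<Rightarrow> real"
  assumes "\<kappa> > 0" and "energy W n \<gamma> \<kappa> x \<le> energy W n \<gamma> \<kappa> y"
    and W_le: "\<And>i. i \<in> {1..n} \<Longrightarrow> W (y i) \<le> W (x i)"
    and int_le: "\<And>i j. i \<in> {1..n} \<Longrightarrow> j \<in> {1..n} \<Longrightarrow>
       \<gamma> i j * (y i - y j)\<^sup>2 \<le> \<gamma> i j * (x i - x j)\<^sup>2"
  shows "\<And>i. i \<in> {1..n} \<Longrightarrow> W (x i) = W (y i)"
    and "\<And>i j. i \<in> {1..n} \<Longrightarrow> j \<in> {1..n} \<Longrightarrow>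
       \<gamma> i j * (x i - x j)\<^sup>2 = \<gamma> i j * (y i - y j)\<^sup>2"
proof -
  define dW where "dW i = W (x i) - W (y i)" for i
  define dI where "dI i j = \<gamma> i j * (x i - x j)\<^sup>2 - \<gamma> i j * (y i - y j)\<^sup>2" for i j
  have dW_nonneg: "\<forall>i\<in>{1..n}. 0 \<le> dW i" and dI_nonneg: "\<forall>i\<in>{1..n}. \<forall>j\<in>{1..n}. 0 \<le> dI i j"
    using W_le int_le by (auto simp: dW_def dI_def)
  then have dW_sum: "0 \<le> (\<Sum>i=1..n. dW i)" and dI_sum: "0 \<le> (\<Sum>i=1..n. \<Sum>j=1..n. dI i j)"
    by (auto intro!: sum_nonneg)
  have "(\<Sum>i=1..n. dW i) + \<kappa> / 2 * (\<Sum>i=1..n. \<Sum>j=1..n. dI i j)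
      = energy W n \<gamma> \<kappa> x - energy W n \<gamma> \<kappa> y"
    unfolding energy_def dW_def dI_def by (simp add: sum_subtractf algebra_simps)
  also have "\<dots> \<le> 0"
    using assms(2) by simp
  finally have "(\<Sum>i=1..n. dW i) + \<kappa> / 2 * (\<Sum>i=1..n. \<Sum>j=1..n. dI i j) \<le> 0" .
  moreover have "0 \<le> \<kappa> / 2 * (\<Sum>i=1..n. \<Sum>j=1..n. dI i j)"
    using \<open>\<kappa> > 0\<close> dI_sum by simp
  ultimately have "(\<Sum>i=1..n. dW i) = 0" "\<kappa> / 2 * (\<Sum>i=1..n. \<Sum>j=1..n. dI i j) = 0"
    using dW_sum by linarith+
  then have "(\<Sum>i=1..n. dW i) = 0" "(\<Sum>i=1..n. \<Sum>j=1..n. dI i j) = 0"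
    using \<open>\<kappa> > 0\<close> by simp_all
  then have dW_zero: "\<forall>i\<in>{1..n}. dW i = 0" and row_zero: "\<forall>i\<in>{1..n}. (\<Sum>j=1..n. dI i j) = 0"
    using dW_nonneg dI_nonneg sum_nonneg[of "{1..n}" "dI _"]
    by (metis (no_types, lifting) finite_atLeastAtMost sum_nonneg_eq_0_iff)+
  have "\<forall>i\<in>{1..n}. \<forall>j\<in>{1..n}. dI i j = 0"
    using row_zero dI_nonneg by (metis finite_atLeastAtMost sum_nonneg_eq_0_iff)
  with dW_zero show "\<And>i. i \<in> {1..n} \<Longrightarrow> W (x i) = W (y i)"
    and "\<And>i j. i \<in> {1..n} \<Longrightarrow> j \<in> {1..n} \<Longrightarrow> \<gamma> i j * (x i - x j)\<^sup>2 = \<gamma> i j * (y i - y j)\<^sup>2"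
    by (simp_all add: dW_def dI_def)
qed

lemma aligned_minimizer_sgn:
  fixes s x :: "nat \<Rightarrow> real"
  assumes W: "W \<in> W_class" and "\<kappa> > 0"
    and minim: "\<And>y. energy W n \<gamma> \<kappa> x \<le> energy W n \<gamma> \<kappa> y"
    and s_sign: "\<And>i. s i \<in> {-1, 1}"
    and aligned: "\<And>i j. i \<in> {1..n} \<Longrightarrow> j \<in> {1..n} \<Longrightarrow> 0 \<le> s i * s j * \<gamma> i j"
  shows "\<forall>i\<in>{1..n}. x i \<noteq> 0"
    and "\<forall>i\<in>{1..n}. \<forall>j\<in>{1..n}. \<gamma> i j \<noteq> 0 \<longrightarrow> s i * sgn (x i) = s j * sgn (x j)"
proof -
  obtain m where "m > 0" and W_decr: "\<And>a b. 0 \<le> a \<Longrightarrow> a < b \<Longrightarrow> b \<le> m \<Longrightarrow> W b < W a"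
    using W_class_strictly_decreasing[OF W] by blast
  define y where "y i = s i * max m \<bar>x i\<bar>" for i
  have lift: "W (s i * max m \<bar>a\<bar>) \<le> W a" "W (s i * max m \<bar>a\<bar>) = W a \<Longrightarrow> m \<le> \<bar>a\<bar>" for i a
    using even_decreasing_lift[where W = W and s = "s i" and m = m and a = a]
      W_class_even[OF W] W_decr s_sign by blast+
  have W_le: "W (y i) \<le> W (x i)" if "i \<in> {1..n}" for i
    unfolding y_def by (rule lift(1))
  have int_le: "\<gamma> i j * (y i - y j)\<^sup>2 \<le> \<gamma> i j * (x i - x j)\<^sup>2"
    if "i \<in> {1..n}" "j \<in> {1..n}" for i j
    unfolding y_def using s_sign aligned[OF that] \<open>m > 0\<close>
    by (intro interaction_le_aligned_lift) auto
  have W_eq: "W (x i) = W (y i)" if "i \<in> {1..n}" for i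
    by (rule energy_termwise_le_imp_eq(1)[OF \<open>\<kappa> > 0\<close> minim]) (use W_le int_le that in auto)
  have int_eq: "\<gamma> i j * (x i - x j)\<^sup>2 = \<gamma> i j * (y i - y j)\<^sup>2"
    if "i \<in> {1..n}" "j \<in> {1..n}" for i j
    by (rule energy_termwise_le_imp_eq(2)[OF \<open>\<kappa> > 0\<close> minim]) (use W_le int_le that in auto)
  have x_large: "m \<le> \<bar>x i\<bar>" if "i \<in> {1..n}" for i
    using W_eq[OF that] unfolding y_def by (intro lift(2)) simp
  then show x_nonzero: "\<forall>i\<in>{1..n}. x i \<noteq> 0"
    using \<open>m > 0\<close> by force
  show "\<forall>i\<in>{1..n}. \<forall>j\<in>{1..n}. \<gamma> i j \<noteq> 0 \<longrightarrow> s i * sgn (x i) = s j * sgn (x j)"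
  proof (intro ballI impI)
    fix i j assume i: "i \<in> {1..n}" and j: "j \<in> {1..n}" and "\<gamma> i j \<noteq> 0"
    moreover have "y i = s i * \<bar>x i\<bar>" "y j = s j * \<bar>x j\<bar>"
      using x_large[OF i] x_large[OF j] by (simp_all add: y_def)
    ultimately show "s i * sgn (x i) = s j * sgn (x j)"
      using int_eq[OF i j] s_sign x_nonzero i j
      by (intro sgn_eq_of_aligned_interaction_eq) auto
  qed
qed

lemma graph_connected_edge_invariant:
  assumes "graph_connected n \<gamma>" and "i \<in> {1..n}" "j \<in> {1..n}"
    and edge: "\<And>a b. a \<in> {1..n} \<Longrightarrow> b \<in> {1..n} \<Longrightarrow> \<gamma> a b \<noteq> 0 \<Longrightarrow> f a = f b"
  shows "f i = f j"
proof -
  have "(i, j) \<in> {(a, b). a \<in> {1..n} \<and> b \<in> {1..n} \<and> \<gamma> a b \<noteq> 0}\<^sup>*"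
    using assms(1-3) unfolding graph_connected_def by blast
  then show ?thesis
  proof (induction rule: rtrancl_induct)
    case (step a b)
    then have "a \<in> {1..n}" "b \<in> {1..n}" "\<gamma> a b \<noteq> 0"
      by auto
    with step.IH show ?case
      using edge by simp
  qed simp
qed

theorem mainTheorem1:
  fixes n :: nat and \<gamma> :: "nat \<Rightarrow> nat \<Rightarrow> real" and V1 V2 :: "nat set"
    and W :: "real \<Rightarrow> real" and \<kappa> :: real and x :: "nat \<Rightarrow> real"
  assumes sym: "\<And>i j. \<gamma> i j = \<gamma> j i"
    and conn: "graph_connected n \<gamma>"
    and bal: "balanced n \<gamma>"
    and part: "V1 \<union> V2 = {1..n}" "V1 \<inter> V2 = {}"
    and same: "\<And>i j. (i \<in> V1 \<and> j \<in> V1) \<or> (i \<in> V2 \<and> j \<in> V2) \<Longrightarrow> \<gamma> i j \<ge> 0"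
    and diff: "\<And>i j. (i \<in> V1 \<and> j \<in> V2) \<or> (i \<in> V2 \<and> j \<in> V1) \<Longrightarrow> \<gamma> i j \<le> 0"
    and W: "W \<in> W_class"
    and kappa: "\<kappa> > 0"
    and minim: "\<And>y. energy W n \<gamma> \<kappa> x \<le> energy W n \<gamma> \<kappa> y"
  shows "(\<forall>i\<in>{1..n}. x i \<noteq> 0) \<and>
    (\<forall>i\<in>{1..n}. \<forall>j\<in>{1..n}. (sgn (x i) = sgn (x j) \<longleftrightarrow>
        ((i \<in> V1 \<and> j \<in> V1) \<or> (i \<in> V2 \<and> j \<in> V2))))"
proof -
  \<comment> \<open>Balance only guarantees that a partition like \<open>V1, V2\<close> exists; here it is given. Neither is \<open>sym\<close>.\<close>
  define s :: "nat \<Rightarrow> real" where "s i = (if i \<in> V1 then 1 else -1)" for i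
  have s_aligned: "0 \<le> s i * s j * \<gamma> i j" if "i \<in> {1..n}" "j \<in> {1..n}" for i j
  proof -
    have "i \<in> V1 \<longleftrightarrow> i \<notin> V2" "j \<in> V1 \<longleftrightarrow> j \<notin> V2"
      using that part by auto
    then show ?thesis
      using same[of i j] diff[of i j] by (auto simp: s_def)
  qed
  have s_sign: "s i \<in> {-1, 1}" for i
    by (simp add: s_def)
  note x_sgn = aligned_minimizer_sgn[OF W kappa minim s_sign s_aligned]
  have "sgn (x i) = sgn (x j) \<longleftrightarrow> ((i \<in> V1 \<and> j \<in> V1) \<or> (i \<in> V2 \<and> j \<in> V2))"
    if "i \<in> {1..n}" "j \<in> {1..n}" for i j
  proof -
    have "s i * sgn (x i) = s j * sgn (x j)"
      using graph_connected_edge_invariant[OF conn that, of "\<lambda>k. s k * sgn (x k)"] x_sgn(2)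
      by simp
    moreover have "sgn (x i) \<in> {-1, 1}" "sgn (x j) \<in> {-1, 1}"
      using x_sgn(1) that by (auto simp: sgn_if)
    ultimately have "sgn (x i) = sgn (x j) \<longleftrightarrow> s i = s j"
      using s_sign[of i] s_sign[of j] by auto
    also have "\<dots> \<longleftrightarrow> ((i \<in> V1 \<and> j \<in> V1) \<or> (i \<in> V2 \<and> j \<in> V2))"
      using that part by (auto simp: s_def)
    finally show ?thesis .
  qed
  with x_sgn(1) show ?thesis by blast
qed

end
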